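(* Let $\sigma_1,\sigma_2>0$ and let $\gamma:\mathbb{S}^1\times[0,T)\to\mathbb{R}^2$ be a smooth family of closed embedded plane curves evolving under $\partial_t\gamma=(\sigma_1k+\sigma_2)\nu$. Suppose that the winding number of the initial curve is positive. Then $T<\infty$ (i.e. the solution cannot exist on $[0,\infty)$).
   Context: $\nu$ is the inward unit normal (the unit tangent rotated by $\pi/2$), $k$ the curvature, $s$ arclength, and the winding number is $\omega=\frac1{2\pi}\int_\gamma k\,ds$. *)

theory Defs
  imports "HOL-Analysis.Analysis"
begin

text \<open>A family of closed curves is a map gamma u t (u the 2pi-periodic parameter on S^1,
  t the time), with values in the plane identified with the complex numbers.\<close>

text \<open>C-infinity on R x I: continuous, and both partial derivatives exist (the time
  derivative one-sided at boundary points of I) and are again C-infinity.\<close>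
coinductive smooth_family :: "real set \<Rightarrow> (real \<Rightarrow> real \<Rightarrow> complex) \<Rightarrow> bool" for I where
  "\<lbrakk> continuous_on (UNIV \<times> I) (\<lambda>(u,t). f u t);
     \<forall>u. \<forall>t\<in>I. ((\<lambda>v. f v t) has_vector_derivative fu u t) (at u);
     \<forall>u. \<forall>t\<in>I. ((\<lambda>s. f u s) has_vector_derivative ft u t) (at t within I);
     smooth_family I fu; smooth_family I ft \<rbrakk> \<Longrightarrow> smooth_family I f"

definition tangent_vec :: "(real \<Rightarrow> real \<Rightarrow> complex) \<Rightarrow> real \<Rightarrow> real \<Rightarrow> complex" where
  "tangent_vec \<gamma> u t = vector_derivative (\<lambda>v. \<gamma> v t) (at u)"

definition normal_vec :: "(real \<Rightarrow> real \<Rightarrow> complex) \<Rightarrow> real \<Rightarrow> real \<Rightarrow> complex" where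
  "normal_vec \<gamma> u t = \<i> * (tangent_vec \<gamma> u t / complex_of_real (norm (tangent_vec \<gamma> u t)))"

text \<open>Signed curvature k, characterised by dT/ds = k nu.\<close>
definition curvature :: "(real \<Rightarrow> real \<Rightarrow> complex) \<Rightarrow> real \<Rightarrow> real \<Rightarrow> real" where
  "curvature \<gamma> u t =
     Im (cnj (tangent_vec \<gamma> u t) * vector_derivative (\<lambda>v. tangent_vec \<gamma> v t) (at u))
     / norm (tangent_vec \<gamma> u t) ^ 3"

definition winding :: "(real \<Rightarrow> real \<Rightarrow> complex) \<Rightarrow> real \<Rightarrow> real" where
  "winding \<gamma> t = integral {0..2*pi} (\<lambda>u. curvature \<gamma> u t * norm (tangent_vec \<gamma> u t)) / (2*pi)"

definition flow_solution ::
  "real \<Rightarrow> real \<Rightarrow> real set \<Rightarrow> (real \<Rightarrow> real \<Rightarrow> complex) \<Rightarrow> bool" where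
  "flow_solution \<sigma>\<^sub>1 \<sigma>\<^sub>2 I \<gamma> \<longleftrightarrow>
     smooth_family I \<gamma> \<and>
     (\<forall>u. \<forall>t\<in>I. \<gamma> (u + 2*pi) t = \<gamma> u t) \<and>
     (\<forall>t\<in>I. inj_on (\<lambda>u. \<gamma> u t) {0..<2*pi}) \<and>
     (\<forall>u. \<forall>t\<in>I. tangent_vec \<gamma> u t \<noteq> 0) \<and>
     (\<forall>u. \<forall>t\<in>I. ((\<lambda>s. \<gamma> u s) has_vector_derivative
          (complex_of_real (\<sigma>\<^sub>1 * curvature \<gamma> u t + \<sigma>\<^sub>2) * normal_vec \<gamma> u t)) (at t within I))"

end

theory Submission
  imports Defs "HOL-Analysis.Analysis"
begin

(* Along the flow the winding number is an integer (argument principle for the tangent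
   u \<mapsto> \<gamma>_u) depending continuously on t, hence constant. Differentiating the length
   L(t) = \<integral> |\<gamma>_u| du, exchanging \<partial>_t \<partial>_u and integrating by parts over the closed
   curve gives the first variation formula L' = - \<integral> (\<sigma>1 k + \<sigma>2) k ds \<le> - \<sigma>2 \<integral> k ds
   = - 2 pi \<sigma>2 \<omega>. So L would decrease at the fixed positive rate 2 pi \<sigma>2 \<omega> forever,
   contradicting L \<ge> 0. *)

lemma continuous_on_fixed_snd:
  assumes "continuous_on (A \<times> B) (\<lambda>(a,b). f a b)" "b \<in> B" "C \<subseteq> A"
  shows "continuous_on C (\<lambda>a. f a b)"
  by (rule continuous_on_compose_Pair[OF assms(1) continuous_on_id continuous_on_const])
     (use assms in auto)

lemma mixed_partials_eq:
  fixes f fu ft fut :: "real \<Rightarrow> real \<Rightarrow> 'a::euclidean_space" and ftu :: "real \<Rightarrow> 'a"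
  assumes I: "convex I" "at t0 within I \<noteq> bot" "t0 \<in> I"
    and c_u: "continuous_on (UNIV \<times> I) (\<lambda>(u,t). fu u t)"
    and c_ut: "continuous_on (UNIV \<times> I) (\<lambda>(u,t). fut u t)"
    and d_u: "\<forall>u. \<forall>t\<in>I. ((\<lambda>v. f v t) has_vector_derivative fu u t) (at u)"
    and d_t: "\<forall>u. \<forall>t\<in>I. ((\<lambda>s. f u s) has_vector_derivative ft u t) (at t within I)"
    and d_ut: "\<forall>u. \<forall>t\<in>I. ((\<lambda>s. fu u s) has_vector_derivative fut u t) (at t within I)"
    and d_tu: "\<forall>u. ((\<lambda>v. ft v t0) has_vector_derivative ftu u) (at u)"
  shows "fut u0 t0 = ftu u0"
proof -
  define a where "a = u0 - 1"
  have ftc: "f u t - f a t = integral {a..u} (\<lambda>v. fu v t)" if "t \<in> I" "a \<le> u" for u t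
  proof -
    have "((\<lambda>v. fu v t) has_integral (f u t - f a t)) {a..u}"
      by (rule fundamental_theorem_of_calculus[OF that(2)])
         (use d_u that in \<open>auto intro: has_vector_derivative_at_within\<close>)
    then show ?thesis by (simp add: integral_unique)
  qed
  \<comment> \<open>Both sides are derivatives at u0 of the integral of fut from a, which the Leibniz rule
      identifies with ft u t0 - ft a t0.\<close>
  have int_fut: "ft u t0 - ft a t0 = integral {a..u} (\<lambda>v. fut v t0)" if "a \<le> u" for u
  proof -
    have L: "((\<lambda>s. integral (cbox a u) (\<lambda>v. fu v s)) has_vector_derivative
        integral (cbox a u) (\<lambda>v. fut v t0)) (at t0 within I)"
    proof (rule leibniz_rule_vector_derivative[where f="\<lambda>s v. fu v s" and fx="\<lambda>s v. fut v s"])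
      show "\<And>s v. s \<in> I \<Longrightarrow> v \<in> cbox a u \<Longrightarrow>
        ((\<lambda>s. fu v s) has_vector_derivative fut v s) (at s within I)"
        using d_ut by auto
      show "\<And>s. s \<in> I \<Longrightarrow> (\<lambda>v. fu v s) integrable_on cbox a u"
        using continuous_on_fixed_snd[OF c_u] by (auto intro: integrable_continuous_interval)
      show "continuous_on (I \<times> cbox a u) (\<lambda>(s, v). fut v s)"
        by (rule continuous_on_subset[OF continuous_on_swap_args[OF c_ut]]) auto
    qed (use I in auto)
    have "((\<lambda>s. integral (cbox a u) (\<lambda>v. fu v s)) has_vector_derivative
        ft u t0 - ft a t0) (at t0 within I)"
      by (rule has_vector_derivative_transform[where f="\<lambda>s. f u s - f a s"])
         (use I ftc that d_t in \<open>auto intro!: derivative_intros\<close>)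
    from vector_derivative_unique_within[OF I(2) this L] show ?thesis by simp
  qed
  have "((\<lambda>u. integral {a..u} (\<lambda>v. fut v t0)) has_vector_derivative fut u0 t0)
      (at u0 within {a..u0+1})"
    by (rule integral_has_vector_derivative[OF continuous_on_fixed_snd[OF c_ut I(3)]])
       (auto simp: a_def)
  moreover have "((\<lambda>u. integral {a..u} (\<lambda>v. fut v t0)) has_vector_derivative ftu u0)
      (at u0 within {a..u0+1})"
  proof (rule has_vector_derivative_transform[where f="\<lambda>u. ft u t0 - ft a t0"])
    show "integral {a..u} (\<lambda>v. fut v t0) = ft u t0 - ft a t0" if "u \<in> {a..u0+1}" for u
      using int_fut that by simp
    have "((\<lambda>u. ft u t0 - ft a t0) has_vector_derivative ftu u0 - 0) (at u0 within {a..u0+1})"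
      by (intro has_vector_derivative_diff has_vector_derivative_const)
         (rule has_vector_derivative_at_within[OF d_tu[rule_format]])
    then show "((\<lambda>u. ft u t0 - ft a t0) has_vector_derivative ftu u0) (at u0 within {a..u0+1})"
      by simp
  qed (simp add: a_def)
  ultimately show ?thesis
    by (rule vector_derivative_unique_within[rotated]) (simp add: a_def at_within_Icc_at)
qed

lemma vector_derivative_periodic:
  fixes f :: "real \<Rightarrow> 'a::real_normed_vector"
  assumes "\<And>v. f (v + p) = f v" and "\<And>v. (f has_vector_derivative f' v) (at v)"
  shows "f' (u + p) = f' u"
proof -
  have "((f \<circ> (\<lambda>v. v + p)) has_vector_derivative 1 *\<^sub>R f' (u + p)) (at u)"
    by (rule vector_diff_chain_at) (auto intro!: derivative_eq_intros assms(2))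
  moreover have "f \<circ> (\<lambda>v. v + p) = f"
    using assms(1) by (auto simp: o_def)
  ultimately show ?thesis
    using vector_derivative_unique_at[OF _ assms(2)] by simp
qed

lemma has_real_derivative_le_imp_le_linear:
  fixes L L' :: "real \<Rightarrow> real"
  assumes "\<And>t. t \<ge> 0 \<Longrightarrow> (L has_real_derivative L' t) (at t within {0..})"
    and "\<And>t. t \<ge> 0 \<Longrightarrow> L' t \<le> c" and "t \<ge> 0"
  shows "L t \<le> L 0 + c * t"
proof -
  have "\<exists>x\<in>{0..t}. L t - L 0 = (\<lambda>h. h * L' x) (t - 0)"
  proof (rule mvt_very_simple[OF assms(3)])
    fix x assume "0 \<le> x" "x \<le> t"
    then show "(L has_derivative (\<lambda>h. h * L' x)) (at x within {0..t})"
      using has_field_derivative_subset[OF assms(1)[of x], of "{0..t}"]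
      by (auto simp: has_field_derivative_def mult.commute[of _ "L' x"])
  qed
  then obtain x where "x \<in> {0..t}" "L t - L 0 = t * L' x"
    by auto
  moreover have "t * L' x \<le> t * c"
    using assms(2) \<open>x \<in> {0..t}\<close> assms(3) by (intro mult_left_mono) auto
  ultimately show ?thesis
    by (simp add: mult.commute)
qed

lemma at_within_atLeast_neq_bot:
  fixes a t :: real
  assumes "a \<le> t"
  shows "at t within {a..} \<noteq> bot"
proof -
  have "at t within {t..t+1} \<noteq> bot"
    by (simp add: at_within_Icc_at_right)
  moreover have "{t..t+1} \<subseteq> {a..}"
    using assms by auto
  ultimately show ?thesis
    by (metis at_le bot.extremum_uniqueI)
qed

lemma Ints_valued_continuous_constant_on:
  fixes f :: "'a::topological_space \<Rightarrow> real"
  assumes "connected S" "continuous_on S f" "\<And>x. x \<in> S \<Longrightarrow> f x \<in> \<int>"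
  shows "f constant_on S"
proof (rule continuous_discrete_range_constant[OF assms(1,2)])
  fix x assume "x \<in> S"
  then show "\<exists>e>0. \<forall>y. y \<in> S \<and> f y \<noteq> f x \<longrightarrow> e \<le> norm (f y - f x)"
    using assms(3) Ints_nonzero_abs_ge1[of "f _ - f x"] by (intro exI[of _ 1]) auto
qed

lemma Re_cnj_sgn_mult: "Re (cnj (sgn z) * w) = Re (cnj z * w) / cmod z"
proof -
  have "cnj (sgn z) * w = inverse (cmod z) *\<^sub>R (cnj z * w)"
    by (simp add: sgn_div_norm complex_cnj_scaleR)
  then show ?thesis
    by (simp add: divide_inverse mult.commute)
qed

lemma Re_cnj_of_real_mult: "Re (cnj (of_real a * z) * w) = a * Re (cnj z * w)"
  by (simp add: algebra_simps)

lemma has_real_derivative_cmod: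
  fixes f :: "real \<Rightarrow> complex"
  assumes "(f has_vector_derivative w) (at x within S)" "f x \<noteq> 0"
  shows "((\<lambda>y. cmod (f y)) has_real_derivative Re (cnj (f x) * w) / cmod (f x)) (at x within S)"
proof -
  have "(norm has_derivative (\<lambda>h. inner h (sgn (f x)))) (at (f x))"
    using has_derivative_norm[OF assms(2)] by simp
  from diff_chain_within[OF assms(1)[unfolded has_vector_derivative_def]
      this[THEN has_derivative_at_withinI]]
  have "((\<lambda>y. cmod (f y)) has_derivative (\<lambda>h. inner (h *\<^sub>R w) (sgn (f x)))) (at x within S)"
    by (simp add: o_def)
  moreover have "(\<lambda>h. inner (h *\<^sub>R w) (sgn (f x))) = (*) (Re (cnj (f x) * w) / cmod (f x))"
    by (rule ext) (simp add: inner_complex_def sgn_div_norm algebra_simps add_divide_distrib divide_inverse)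
  ultimately show ?thesis
    by (simp add: has_field_derivative_def)
qed

lemma has_vector_derivative_sgn:
  fixes f :: "real \<Rightarrow> complex"
  assumes "(f has_vector_derivative w) (at x within S)" "f x \<noteq> 0"
  shows "((\<lambda>y. sgn (f y)) has_vector_derivative of_real (Im (w / f x)) * (\<i> * sgn (f x)))
    (at x within S)"
proof -
  have "((\<lambda>y. inverse (cmod (f y)) *\<^sub>R f y) has_vector_derivative
      inverse (cmod (f x)) *\<^sub>R w
        - (inverse (cmod (f x)) * (Re (cnj (f x) * w) / cmod (f x)) * inverse (cmod (f x))) *\<^sub>R f x)
      (at x within S)"
    using has_vector_derivative_scaleR[OF DERIV_inverse'[OF has_real_derivative_cmod[OF assms]] assms(1)]
      assms(2) by (simp add: algebra_simps)
  moreover have "inverse (cmod (f x)) *\<^sub>R w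
        - (inverse (cmod (f x)) * (Re (cnj (f x) * w) / cmod (f x)) * inverse (cmod (f x))) *\<^sub>R f x
      = of_real (Im (w / f x)) * (\<i> * sgn (f x))"
  proof -
    define r where "r = cmod (f x)"
    define q where "q = cnj (f x) * w"
    have r: "r \<noteq> 0" using assms(2) by (simp add: r_def)
    have "inverse r *\<^sub>R w - (inverse r * (Re q / r) * inverse r) *\<^sub>R f x
        = (w * of_real (r^2) - of_real (Re q) * f x) / of_real (r^3)"
      using r by (simp add: scaleR_conv_of_real field_simps power2_eq_square power3_eq_cube)
    also have "w * of_real (r^2) = f x * q"
      unfolding r_def q_def complex_norm_square by (simp add: algebra_simps)
    also have "f x * q - of_real (Re q) * f x = \<i> * of_real (Im q) * f x"
      by (subst complex_eq[of q]) (simp add: algebra_simps)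
    also have "\<i> * of_real (Im q) * f x / of_real (r^3) = of_real (Im q / r^2) * (\<i> * (f x / of_real r))"
      using r by (simp add: field_simps power2_eq_square power3_eq_cube)
    also have "Im q / r^2 = Im (w / f x)"
      by (simp add: r_def q_def Im_divide' algebra_simps)
    finally show ?thesis
      by (simp add: r_def q_def sgn_div_norm scaleR_conv_of_real divide_inverse)
  qed
  ultimately show ?thesis
    by (simp add: sgn_div_norm)
qed

lemma has_real_derivative_integral_cmod:
  fixes f ft :: "real \<Rightarrow> real \<Rightarrow> complex"
  assumes "convex I" "t \<in> I"
    and "continuous_on (UNIV \<times> I) (\<lambda>(u,s). f u s)" "continuous_on (UNIV \<times> I) (\<lambda>(u,s). ft u s)"
    and "\<forall>u. \<forall>s\<in>I. ((\<lambda>s. f u s) has_vector_derivative ft u s) (at s within I)"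
    and "\<And>u s. s \<in> I \<Longrightarrow> f u s \<noteq> 0"
  shows "((\<lambda>s. integral {a..b} (\<lambda>u. cmod (f u s))) has_real_derivative
      integral {a..b} (\<lambda>u. Re (cnj (sgn (f u t)) * ft u t))) (at t within I)"
proof -
  define D where "D s u = Re (cnj (sgn (f u s)) * ft u s)" for s u
  have "((\<lambda>s. integral (cbox a b) (\<lambda>u. cmod (f u s))) has_vector_derivative
      integral (cbox a b) (D t)) (at t within I)"
  proof (rule leibniz_rule_vector_derivative[where f="\<lambda>s u. cmod (f u s)" and fx=D])
    show "((\<lambda>s. cmod (f u s)) has_vector_derivative D s u) (at s within I)" if "s \<in> I" for s u
    proof -
      have "((\<lambda>s. cmod (f u s)) has_real_derivative Re (cnj (f u s) * ft u s) / cmod (f u s))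
          (at s within I)"
        using assms(5,6) that by (intro has_real_derivative_cmod) auto
      then show ?thesis
        by (simp only: D_def Re_cnj_sgn_mult has_real_derivative_iff_has_vector_derivative)
    qed
    show "(\<lambda>u. cmod (f u s)) integrable_on cbox a b" if "s \<in> I" for s
      by (intro integrable_continuous continuous_on_norm
          continuous_on_fixed_snd[OF assms(3) that subset_UNIV])
    have "continuous_on (UNIV \<times> I) (\<lambda>x. f (fst x) (snd x))"
      and "continuous_on (UNIV \<times> I) (\<lambda>x. ft (fst x) (snd x))"
      using assms(3,4) by (simp_all add: split_beta)
    then have "continuous_on (UNIV \<times> I) (\<lambda>(u, s). D s u)"
      unfolding D_def split_beta using assms(6)
      by (intro continuous_on_Re continuous_on_mult continuous_on_cnj continuous_on_sgn) auto
    then show "continuous_on (I \<times> cbox a b) (\<lambda>(s, u). D s u)"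
      by (rule continuous_on_subset[OF continuous_on_swap_args]) auto
  qed (use assms(1,2) in auto)
  then show ?thesis
    by (simp only: D_def[abs_def] interval_cbox has_real_derivative_iff_has_vector_derivative)
qed

lemma integral_Im_logderiv_in_Ints:
  fixes f f' :: "real \<Rightarrow> complex"
  assumes "a \<le> b" and "f b = f a"
    and f': "\<And>x. x \<in> {a..b} \<Longrightarrow> (f has_vector_derivative f' x) (at x within {a..b})"
    and "continuous_on {a..b} f'" and "\<And>x. x \<in> {a..b} \<Longrightarrow> f x \<noteq> 0"
  shows "integral {a..b} (\<lambda>x. Im (f' x / f x)) / (2*pi) \<in> \<int>"
proof -
  have "continuous_on {a..b} f"
    using f' by (intro continuous_on_vector_derivative) blast
  then have cont: "continuous_on {a..b} (\<lambda>x. f' x / f x)"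
    using assms(4,5) by (intro continuous_intros) auto
  define A where "A x = integral {a..x} (\<lambda>x. f' x / f x)" for x
  have A': "(A has_vector_derivative f' x / f x) (at x within {a..b})" if "x \<in> {a..b}" for x
    unfolding A_def by (rule integral_has_vector_derivative[OF cont that])
  \<comment> \<open>A is a continuous logarithm of f: f * exp (- A) has derivative zero.\<close>
  have "((\<lambda>x. f x * exp (- A x)) has_vector_derivative 0) (at x within {a..b})"
    if "x \<in> {a..b}" for x
  proof -
    have "((\<lambda>x. exp (- A x)) has_vector_derivative - (f' x / f x) * exp (- A x)) (at x within {a..b})"
      using field_vector_diff_chain_within[OF has_vector_derivative_minus[OF A'[OF that]]
          DERIV_exp[THEN has_field_derivative_at_within]]
      by (simp add: o_def)
    from has_vector_derivative_mult[OF f'[OF that] this]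
    show ?thesis
      using assms(5)[OF that] by (simp add: field_simps)
  qed
  then have "((\<lambda>x. 0) has_integral (f b * exp (- A b) - f a * exp (- A a))) {a..b}"
    by (intro fundamental_theorem_of_calculus[OF assms(1)]) auto
  then have "exp (- A b) = 1"
    using assms(1,2,5) by (simp add: A_def)
  then obtain n :: int where n: "Im (- A b) = of_int (2*n) * pi"
    by (auto simp: exp_eq_1)
  have "((\<lambda>x. Im (f' x / f x)) has_integral Im (A b)) {a..b}"
    unfolding A_def by (rule has_integral_Im[OF integrable_integral[OF integrable_continuous_interval[OF cont]]])
  then have "integral {a..b} (\<lambda>x. Im (f' x / f x)) = of_int (-2*n) * pi"
    using n by (simp add: integral_unique)
  then show ?thesis
    by simp
qed

lemma integral_by_parts_periodic:
  fixes p q :: "real \<Rightarrow> complex"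
  assumes "a \<le> b" and "p b = p a" and "q b = q a"
    and "\<And>x. x \<in> {a..b} \<Longrightarrow> (p has_vector_derivative p' x) (at x within {a..b})"
    and "\<And>x. x \<in> {a..b} \<Longrightarrow> (q has_vector_derivative q' x) (at x within {a..b})"
    and "continuous_on {a..b} (\<lambda>x. cnj (p' x) * q x)"
  shows "integral {a..b} (\<lambda>x. Re (cnj (p x) * q' x)) = - integral {a..b} (\<lambda>x. Re (cnj (p' x) * q x))"
proof -
  have "((\<lambda>x. cnj (p x) * q' x + cnj (p' x) * q x) has_integral
      cnj (p b) * q b - cnj (p a) * q a) {a..b}"
    by (intro fundamental_theorem_of_calculus[OF assms(1)] has_vector_derivative_mult
        has_vector_derivative_cnj assms(4,5)) (auto simp: algebra_simps)
  from has_integral_Re[OF this]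
  have sum: "((\<lambda>x. Re (cnj (p x) * q' x) + Re (cnj (p' x) * q x)) has_integral 0) {a..b}"
    using assms(2,3) by simp
  have "(\<lambda>x. Re (cnj (p' x) * q x)) integrable_on {a..b}"
    by (intro integrable_continuous_interval continuous_intros assms(6))
  moreover from integrable_diff[OF has_integral_integrable[OF sum] this]
  have "(\<lambda>x. Re (cnj (p x) * q' x)) integrable_on {a..b}"
    by simp
  ultimately have "integral {a..b} (\<lambda>x. Re (cnj (p x) * q' x)) + integral {a..b} (\<lambda>x. Re (cnj (p' x) * q x)) = 0"
    using integral_add integral_unique[OF sum] by metis
  then show ?thesis
    by (simp add: eq_neg_iff_add_eq_0)
qed

section \<open>Smooth families of closed curves\<close>

lemma smooth_familyE:
  assumes "smooth_family I f"
  obtains fu ft where "continuous_on (UNIV \<times> I) (\<lambda>(u,t). f u t)"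
    "\<forall>u. \<forall>t\<in>I. ((\<lambda>v. f v t) has_vector_derivative fu u t) (at u)"
    "\<forall>u. \<forall>t\<in>I. ((\<lambda>s. f u s) has_vector_derivative ft u t) (at t within I)"
    "smooth_family I fu" "smooth_family I ft"
  using assms by (cases rule: smooth_family.cases) blast

lemma smooth_family_continuous_on:
  "smooth_family I f \<Longrightarrow> continuous_on (UNIV \<times> I) (\<lambda>(u,t). f u t)"
  by (erule smooth_familyE)

lemma smooth_family_cong:
  assumes "smooth_family I f" and "\<forall>u. \<forall>t\<in>I. g u t = f u t"
  shows "smooth_family I g"
  using assms
proof (coinduction arbitrary: f g rule: smooth_family.coinduct)
  case (smooth_family f g)
  obtain fu ft where f: "continuous_on (UNIV \<times> I) (\<lambda>(u,t). f u t)"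
    "\<forall>u. \<forall>t\<in>I. ((\<lambda>v. f v t) has_vector_derivative fu u t) (at u)"
    "\<forall>u. \<forall>t\<in>I. ((\<lambda>s. f u s) has_vector_derivative ft u t) (at t within I)"
    "smooth_family I fu" "smooth_family I ft"
    using smooth_family(1) by (rule smooth_familyE)
  have "continuous_on (UNIV \<times> I) (\<lambda>(u,t). g u t)"
    using f(1) by (rule continuous_on_eq) (use smooth_family(2) in auto)
  moreover have "\<forall>u. \<forall>t\<in>I. ((\<lambda>v. g v t) has_vector_derivative fu u t) (at u)"
  proof (intro allI ballI)
    fix u t assume "t \<in> I"
    then have "(\<lambda>v. g v t) = (\<lambda>v. f v t)"
      using smooth_family(2) by blast
    then show "((\<lambda>v. g v t) has_vector_derivative fu u t) (at u)"
      using f(2) \<open>t \<in> I\<close> by simp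
  qed
  moreover have "\<forall>u. \<forall>t\<in>I. ((\<lambda>s. g u s) has_vector_derivative ft u t) (at t within I)"
  proof (intro allI ballI)
    fix u t assume "t \<in> I"
    then show "((\<lambda>s. g u s) has_vector_derivative ft u t) (at t within I)"
    proof (rule has_vector_derivative_transform[where f="\<lambda>s. f u s"])
      show "g u s = f u s" if "s \<in> I" for s
        using smooth_family(2) that by blast
    qed (use f(3) \<open>t \<in> I\<close> in blast)
  qed
  ultimately show ?case
    using f(4,5) by (intro exI[of _ g] exI[of _ fu] exI[of _ ft] conjI refl disjI2)
qed

lemma smooth_family_has_tangent_vec:
  assumes "smooth_family I f" and "t \<in> I"
  shows "((\<lambda>v. f v t) has_vector_derivative tangent_vec f u t) (at u)"
proof -
  obtain fu where "\<forall>u. \<forall>t\<in>I. ((\<lambda>v. f v t) has_vector_derivative fu u t) (at u)"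
    using assms(1) by (rule smooth_familyE)
  then have "((\<lambda>v. f v t) has_vector_derivative fu u t) (at u)"
    using assms(2) by blast
  then show ?thesis
    by (simp add: tangent_vec_def vector_derivative_at)
qed

lemma smooth_family_tangent_vec:
  assumes "smooth_family I f"
  shows "smooth_family I (tangent_vec f)"
proof -
  obtain fu where fu: "\<forall>u. \<forall>t\<in>I. ((\<lambda>v. f v t) has_vector_derivative fu u t) (at u)"
    and "smooth_family I fu"
    using assms by (rule smooth_familyE)
  have "\<forall>u. \<forall>t\<in>I. tangent_vec f u t = fu u t"
    using fu by (auto simp: tangent_vec_def vector_derivative_at)
  then show ?thesis
    by (rule smooth_family_cong[OF \<open>smooth_family I fu\<close>])
qed

lemma smooth_family_continuous_on_fixed_time:
  "smooth_family I f \<Longrightarrow> t \<in> I \<Longrightarrow> continuous_on S (\<lambda>u. f u t)"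
  by (rule continuous_on_fixed_snd[OF smooth_family_continuous_on]) auto

lemma tangent_vec_periodic:
  assumes "smooth_family I \<gamma>" "t \<in> I" "\<And>u. \<gamma> (u + p) t = \<gamma> u t"
  shows "tangent_vec \<gamma> (u + p) t = tangent_vec \<gamma> u t"
  using assms(3) smooth_family_has_tangent_vec[OF assms(1,2)]
  by (rule vector_derivative_periodic)

lemma normal_vec_eq_sgn: "normal_vec \<gamma> u t = \<i> * sgn (tangent_vec \<gamma> u t)"
  by (simp add: normal_vec_def sgn_eq)

lemma curvature_eq:
  "curvature \<gamma> u t = Im (cnj (tangent_vec \<gamma> u t) * tangent_vec (tangent_vec \<gamma>) u t)
    / cmod (tangent_vec \<gamma> u t) ^ 3"
  by (simp add: curvature_def tangent_vec_def)

lemma curvature_mult_speed: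
  assumes "tangent_vec \<gamma> u t \<noteq> 0"
  shows "curvature \<gamma> u t * cmod (tangent_vec \<gamma> u t)
    = Im (tangent_vec (tangent_vec \<gamma>) u t / tangent_vec \<gamma> u t)"
proof -
  define z where "z = tangent_vec \<gamma> u t"
  define w where "w = tangent_vec (tangent_vec \<gamma>) u t"
  have "curvature \<gamma> u t = Im (cnj z * w) / cmod z ^ 3"
    unfolding z_def w_def by (rule curvature_eq)
  moreover have "Im (w / z) = Im (cnj z * w) / cmod z ^ 2"
    by (simp add: Im_divide' algebra_simps)
  ultimately show ?thesis
    using assms by (simp add: z_def[symmetric] w_def[symmetric] power2_eq_square power3_eq_cube)
qed

section \<open>Constancy of the winding number\<close>

lemma winding_eq_integral_Im_logderiv:
  assumes "\<And>u. tangent_vec \<gamma> u t \<noteq> 0"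
  shows "winding \<gamma> t
    = integral {0..2*pi} (\<lambda>u. Im (tangent_vec (tangent_vec \<gamma>) u t / tangent_vec \<gamma> u t)) / (2*pi)"
  using assms by (simp add: winding_def curvature_mult_speed)

lemma winding_in_Ints:
  assumes "smooth_family I \<gamma>" "t \<in> I"
    and "\<And>u. \<gamma> (u + 2*pi) t = \<gamma> u t" "\<And>u. tangent_vec \<gamma> u t \<noteq> 0"
  shows "winding \<gamma> t \<in> \<int>"
proof -
  have \<tau>: "smooth_family I (tangent_vec \<gamma>)"
    by (rule smooth_family_tangent_vec[OF assms(1)])
  have "integral {0..2*pi} (\<lambda>u. Im (tangent_vec (tangent_vec \<gamma>) u t / tangent_vec \<gamma> u t)) / (2*pi)
      \<in> \<int>"
  proof (rule integral_Im_logderiv_in_Ints[where a=0 and b="2*pi" and f="\<lambda>u. tangent_vec \<gamma> u t"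
        and f'="\<lambda>u. tangent_vec (tangent_vec \<gamma>) u t"])
    show "tangent_vec \<gamma> (2*pi) t = tangent_vec \<gamma> 0 t"
      using tangent_vec_periodic[where p="2*pi" and u=0, OF assms(1,2)] assms(3) by simp
    show "continuous_on {0..2*pi} (\<lambda>u. tangent_vec (tangent_vec \<gamma>) u t)"
      by (rule smooth_family_continuous_on_fixed_time[OF smooth_family_tangent_vec[OF \<tau>] assms(2)])
    show "((\<lambda>u. tangent_vec \<gamma> u t) has_vector_derivative tangent_vec (tangent_vec \<gamma>) u t)
        (at u within {0..2*pi})" for u
      by (rule has_vector_derivative_at_within[OF smooth_family_has_tangent_vec[OF \<tau> assms(2)]])
    show "tangent_vec \<gamma> u t \<noteq> 0" for u
      by (rule assms(4))
  qed simp
  then show ?thesis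
    by (simp only: winding_eq_integral_Im_logderiv[OF assms(4)])
qed

lemma continuous_on_winding:
  assumes "smooth_family I \<gamma>" "\<And>u t. t \<in> I \<Longrightarrow> tangent_vec \<gamma> u t \<noteq> 0"
  shows "continuous_on I (winding \<gamma>)"
proof -
  define W where "W u t = Im (tangent_vec (tangent_vec \<gamma>) u t / tangent_vec \<gamma> u t)" for u t
  have \<tau>: "smooth_family I (tangent_vec \<gamma>)"
    by (rule smooth_family_tangent_vec[OF assms(1)])
  have "continuous_on (UNIV \<times> I) (\<lambda>x. tangent_vec \<gamma> (fst x) (snd x))"
    and "continuous_on (UNIV \<times> I) (\<lambda>x. tangent_vec (tangent_vec \<gamma>) (fst x) (snd x))"
    using smooth_family_continuous_on[OF \<tau>]
      smooth_family_continuous_on[OF smooth_family_tangent_vec[OF \<tau>]]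
    by (simp_all add: split_beta)
  then have "continuous_on (UNIV \<times> I) (\<lambda>(u,t). W u t)"
    unfolding W_def split_beta using assms(2)
    by (intro continuous_on_Im continuous_on_divide) auto
  then have "continuous_on (I \<times> cbox 0 (2*pi)) (\<lambda>(t,u). W u t)"
    by (rule continuous_on_subset[OF continuous_on_swap_args]) auto
  then have "continuous_on I (\<lambda>t. integral (cbox 0 (2*pi)) (\<lambda>u. W u t))"
    by (rule integral_continuous_on_param)
  then have "continuous_on I (\<lambda>t. integral {0..2*pi} (\<lambda>u. W u t) / (2*pi))"
    by (intro continuous_on_divide continuous_on_const) auto
  then show ?thesis
  proof (rule continuous_on_eq)
    fix t assume "t \<in> I"
    then show "integral {0..2*pi} (\<lambda>u. W u t) / (2*pi) = winding \<gamma> t"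
      using winding_eq_integral_Im_logderiv[of \<gamma> t] assms(2) by (simp add: W_def)
  qed
qed

lemma winding_constant_on:
  assumes "smooth_family I \<gamma>" "connected I"
    and "\<And>u t. t \<in> I \<Longrightarrow> \<gamma> (u + 2*pi) t = \<gamma> u t"
    and "\<And>u t. t \<in> I \<Longrightarrow> tangent_vec \<gamma> u t \<noteq> 0"
  shows "winding \<gamma> constant_on I"
proof (rule Ints_valued_continuous_constant_on[OF assms(2)])
  show "continuous_on I (winding \<gamma>)"
    by (rule continuous_on_winding[OF assms(1,4)])
  show "winding \<gamma> t \<in> \<int>" if "t \<in> I" for t
    by (rule winding_in_Ints[OF assms(1) that]) (use assms(3,4) that in auto)
qed

section \<open>First variation of length\<close>

definition curve_length :: "(real \<Rightarrow> real \<Rightarrow> complex) \<Rightarrow> real \<Rightarrow> real" where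
  "curve_length \<gamma> t = integral {0..2*pi} (\<lambda>u. cmod (tangent_vec \<gamma> u t))"

lemma curve_length_nonneg: "curve_length \<gamma> t \<ge> 0"
  unfolding curve_length_def
  by (cases "(\<lambda>u. cmod (tangent_vec \<gamma> u t)) integrable_on {0..2*pi}")
     (auto intro: integral_nonneg simp: not_integrable_integral)

lemma has_real_derivative_curve_length:
  assumes "smooth_family I \<gamma>" "convex I" "t \<in> I" "at t within I \<noteq> bot"
    and "\<And>u s. s \<in> I \<Longrightarrow> tangent_vec \<gamma> u s \<noteq> 0"
    and V: "\<forall>u. \<forall>s\<in>I. ((\<lambda>s. \<gamma> u s) has_vector_derivative V u s) (at s within I)"
    and "smooth_family I V"
  shows "(curve_length \<gamma> has_real_derivative
      integral {0..2*pi} (\<lambda>u. Re (cnj (sgn (tangent_vec \<gamma> u t)) * tangent_vec V u t)))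
    (at t within I)"
proof -
  have \<tau>: "smooth_family I (tangent_vec \<gamma>)"
    by (rule smooth_family_tangent_vec[OF assms(1)])
  obtain \<tau>t where \<tau>t: "\<forall>u. \<forall>s\<in>I. ((\<lambda>s. tangent_vec \<gamma> u s) has_vector_derivative \<tau>t u s) (at s within I)"
    and "smooth_family I \<tau>t"
    using \<tau> by (rule smooth_familyE)
  have "\<forall>u. \<forall>s\<in>I. ((\<lambda>v. \<gamma> v s) has_vector_derivative tangent_vec \<gamma> u s) (at u)"
    using smooth_family_has_tangent_vec[OF assms(1)] by blast
  moreover have "\<forall>u. ((\<lambda>v. V v t) has_vector_derivative tangent_vec V u t) (at u)"
    using smooth_family_has_tangent_vec[OF \<open>smooth_family I V\<close> assms(3)] by blast
  ultimately have mixed: "\<tau>t u t = tangent_vec V u t" for u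
    by (rule mixed_partials_eq[where f=\<gamma> and fu="tangent_vec \<gamma>" and ft=V and ftu="\<lambda>u. tangent_vec V u t",
          OF assms(2,4,3) smooth_family_continuous_on[OF \<tau>]
          smooth_family_continuous_on[OF \<open>smooth_family I \<tau>t\<close>] _ V \<tau>t])
  have "((\<lambda>s. integral {0..2*pi} (\<lambda>u. cmod (tangent_vec \<gamma> u s))) has_real_derivative
      integral {0..2*pi} (\<lambda>u. Re (cnj (sgn (tangent_vec \<gamma> u t)) * \<tau>t u t))) (at t within I)"
    by (rule has_real_derivative_integral_cmod[OF assms(2,3) smooth_family_continuous_on[OF \<tau>]
          smooth_family_continuous_on[OF \<open>smooth_family I \<tau>t\<close>] \<tau>t assms(5)])
  then show ?thesis
    by (simp only: mixed curve_length_def[abs_def])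
qed

lemma integral_unit_tangent_by_parts:
  assumes "smooth_family I \<gamma>" "t \<in> I"
    and "\<And>u. \<gamma> (u + 2*pi) t = \<gamma> u t" "\<And>u. tangent_vec \<gamma> u t \<noteq> 0"
    and "smooth_family I V" "V (2*pi) t = V 0 t"
  shows "integral {0..2*pi} (\<lambda>u. Re (cnj (sgn (tangent_vec \<gamma> u t)) * tangent_vec V u t))
    = - integral {0..2*pi} (\<lambda>u. curvature \<gamma> u t * cmod (tangent_vec \<gamma> u t)
          * Re (cnj (normal_vec \<gamma> u t) * V u t))"
proof -
  have \<tau>: "smooth_family I (tangent_vec \<gamma>)"
    by (rule smooth_family_tangent_vec[OF assms(1)])
  define \<kappa>s where "\<kappa>s u = Im (tangent_vec (tangent_vec \<gamma>) u t / tangent_vec \<gamma> u t)" for u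
  have "integral {0..2*pi} (\<lambda>u. Re (cnj (sgn (tangent_vec \<gamma> u t)) * tangent_vec V u t))
    = - integral {0..2*pi} (\<lambda>u. Re (cnj (of_real (\<kappa>s u) * (\<i> * sgn (tangent_vec \<gamma> u t))) * V u t))"
  proof (rule integral_by_parts_periodic[where a=0 and b="2*pi" and p="\<lambda>u. sgn (tangent_vec \<gamma> u t)"
        and q="\<lambda>u. V u t"])
    show "sgn (tangent_vec \<gamma> (2*pi) t) = sgn (tangent_vec \<gamma> 0 t)"
      using tangent_vec_periodic[where p="2*pi" and u=0, OF assms(1,2)] assms(3) by simp
    show "((\<lambda>u. sgn (tangent_vec \<gamma> u t)) has_vector_derivative
        of_real (\<kappa>s u) * (\<i> * sgn (tangent_vec \<gamma> u t))) (at u within {0..2*pi})" for u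
      unfolding \<kappa>s_def
      by (rule has_vector_derivative_sgn[OF has_vector_derivative_at_within[OF
            smooth_family_has_tangent_vec[OF \<tau> assms(2)]] assms(4)])
    show "((\<lambda>u. V u t) has_vector_derivative tangent_vec V u t) (at u within {0..2*pi})" for u
      by (rule has_vector_derivative_at_within[OF smooth_family_has_tangent_vec[OF assms(5,2)]])
    have "continuous_on {0..2*pi} (\<lambda>u. tangent_vec \<gamma> u t)"
      and "continuous_on {0..2*pi} (\<lambda>u. tangent_vec (tangent_vec \<gamma>) u t)"
      and "continuous_on {0..2*pi} (\<lambda>u. V u t)"
      using smooth_family_continuous_on_fixed_time assms(2,5) \<tau> smooth_family_tangent_vec by blast+
    then show "continuous_on {0..2*pi}
        (\<lambda>u. cnj (of_real (\<kappa>s u) * (\<i> * sgn (tangent_vec \<gamma> u t))) * V u t)"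
      unfolding \<kappa>s_def using assms(4)
      by (intro continuous_on_mult continuous_on_cnj continuous_on_of_real continuous_on_Im
          continuous_on_divide continuous_on_sgn continuous_on_const) auto
  qed (use assms(6) in simp_all)
  also have "\<dots> = - integral {0..2*pi} (\<lambda>u. curvature \<gamma> u t * cmod (tangent_vec \<gamma> u t)
          * Re (cnj (normal_vec \<gamma> u t) * V u t))"
    by (intro arg_cong[where f=uminus] integral_cong)
       (simp only: Re_cnj_of_real_mult \<kappa>s_def curvature_mult_speed[OF assms(4)] normal_vec_eq_sgn)
  finally show ?thesis .
qed

definition flow_velocity ::
  "real \<Rightarrow> real \<Rightarrow> (real \<Rightarrow> real \<Rightarrow> complex) \<Rightarrow> real \<Rightarrow> real \<Rightarrow> complex" where
  "flow_velocity \<sigma>\<^sub>1 \<sigma>\<^sub>2 \<gamma> u t = of_real (\<sigma>\<^sub>1 * curvature \<gamma> u t + \<sigma>\<^sub>2) * normal_vec \<gamma> u t"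

lemma flow_solutionD:
  assumes "flow_solution \<sigma>\<^sub>1 \<sigma>\<^sub>2 I \<gamma>"
  shows "smooth_family I \<gamma>"
    and "\<And>u t. t \<in> I \<Longrightarrow> \<gamma> (u + 2*pi) t = \<gamma> u t"
    and "\<And>u t. t \<in> I \<Longrightarrow> tangent_vec \<gamma> u t \<noteq> 0"
    and "\<forall>u. \<forall>t\<in>I. ((\<lambda>s. \<gamma> u s) has_vector_derivative flow_velocity \<sigma>\<^sub>1 \<sigma>\<^sub>2 \<gamma> u t) (at t within I)"
  using assms by (auto simp: flow_solution_def flow_velocity_def)

lemma smooth_family_flow_velocity:
  assumes "flow_solution \<sigma>\<^sub>1 \<sigma>\<^sub>2 I \<gamma>" "\<And>t. t \<in> I \<Longrightarrow> at t within I \<noteq> bot"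
  shows "smooth_family I (flow_velocity \<sigma>\<^sub>1 \<sigma>\<^sub>2 \<gamma>)"
proof -
  obtain \<gamma>t where \<gamma>t: "\<forall>u. \<forall>t\<in>I. ((\<lambda>s. \<gamma> u s) has_vector_derivative \<gamma>t u t) (at t within I)"
    and "smooth_family I \<gamma>t"
    using flow_solutionD(1)[OF assms(1)] by (rule smooth_familyE)
  have "\<forall>u. \<forall>t\<in>I. flow_velocity \<sigma>\<^sub>1 \<sigma>\<^sub>2 \<gamma> u t = \<gamma>t u t"
    using vector_derivative_unique_within[OF assms(2)] flow_solutionD(4)[OF assms(1)] \<gamma>t by blast
  then show ?thesis
    by (rule smooth_family_cong[OF \<open>smooth_family I \<gamma>t\<close>])
qed

lemma flow_velocity_periodic:
  assumes "smooth_family I \<gamma>" "t \<in> I" "\<And>u. \<gamma> (u + p) t = \<gamma> u t"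
  shows "flow_velocity \<sigma>\<^sub>1 \<sigma>\<^sub>2 \<gamma> (u + p) t = flow_velocity \<sigma>\<^sub>1 \<sigma>\<^sub>2 \<gamma> u t"
proof -
  have \<tau>: "tangent_vec \<gamma> (v + p) t = tangent_vec \<gamma> v t" for v
    using tangent_vec_periodic[where p=p and u=v, OF assms(1,2)] assms(3) by blast
  moreover have "tangent_vec (tangent_vec \<gamma>) (u + p) t = tangent_vec (tangent_vec \<gamma>) u t"
    using tangent_vec_periodic[where p=p and u=u, OF smooth_family_tangent_vec[OF assms(1)] assms(2)] \<tau>
    by blast
  ultimately show ?thesis
    by (simp add: flow_velocity_def curvature_eq normal_vec_def)
qed

lemma Re_cnj_normal_vec_mult_flow_velocity:
  assumes "tangent_vec \<gamma> u t \<noteq> 0"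
  shows "Re (cnj (normal_vec \<gamma> u t) * flow_velocity \<sigma>\<^sub>1 \<sigma>\<^sub>2 \<gamma> u t) = \<sigma>\<^sub>1 * curvature \<gamma> u t + \<sigma>\<^sub>2"
proof -
  have "cmod (normal_vec \<gamma> u t) = 1"
    using assms by (simp add: normal_vec_eq_sgn norm_mult norm_sgn)
  then have "cnj (normal_vec \<gamma> u t) * normal_vec \<gamma> u t = 1"
    using complex_norm_square[of "normal_vec \<gamma> u t"] by (simp add: mult.commute)
  then have "cnj (normal_vec \<gamma> u t) * flow_velocity \<sigma>\<^sub>1 \<sigma>\<^sub>2 \<gamma> u t = of_real (\<sigma>\<^sub>1 * curvature \<gamma> u t + \<sigma>\<^sub>2)"
    by (simp add: flow_velocity_def ac_simps)
  then show ?thesis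
    by (simp only: Re_complex_of_real)
qed

lemma has_real_derivative_curve_length_flow:
  assumes "flow_solution \<sigma>\<^sub>1 \<sigma>\<^sub>2 I \<gamma>" "convex I" "\<And>t. t \<in> I \<Longrightarrow> at t within I \<noteq> bot" "t \<in> I"
  shows "(curve_length \<gamma> has_real_derivative - integral {0..2*pi}
      (\<lambda>u. (\<sigma>\<^sub>1 * curvature \<gamma> u t + \<sigma>\<^sub>2) * curvature \<gamma> u t * cmod (tangent_vec \<gamma> u t)))
    (at t within I)"
proof -
  note flow = flow_solutionD[OF assms(1)]
  let ?V = "flow_velocity \<sigma>\<^sub>1 \<sigma>\<^sub>2 \<gamma>"
  have V: "smooth_family I ?V"
    by (rule smooth_family_flow_velocity[OF assms(1,3)])
  have V_periodic: "?V (2*pi) t = ?V 0 t"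
    using flow_velocity_periodic[where p="2*pi" and u=0, OF flow(1) assms(4)] flow(2) assms(4)
    by simp
  have "(curve_length \<gamma> has_real_derivative
      integral {0..2*pi} (\<lambda>u. Re (cnj (sgn (tangent_vec \<gamma> u t)) * tangent_vec ?V u t))) (at t within I)"
    using flow(3)
    by (intro has_real_derivative_curve_length[OF flow(1) assms(2,4) assms(3)[OF assms(4)] _ flow(4) V])
       blast
  also have "integral {0..2*pi} (\<lambda>u. Re (cnj (sgn (tangent_vec \<gamma> u t)) * tangent_vec ?V u t))
    = - integral {0..2*pi} (\<lambda>u. curvature \<gamma> u t * cmod (tangent_vec \<gamma> u t)
          * Re (cnj (normal_vec \<gamma> u t) * ?V u t))"
    using flow(2,3) assms(4)
    by (intro integral_unit_tangent_by_parts[OF flow(1) assms(4) _ _ V V_periodic]) auto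
  also have "\<dots> = - integral {0..2*pi}
      (\<lambda>u. (\<sigma>\<^sub>1 * curvature \<gamma> u t + \<sigma>\<^sub>2) * curvature \<gamma> u t * cmod (tangent_vec \<gamma> u t))"
  proof (intro arg_cong[where f=uminus] integral_cong)
    fix u
    have "Re (cnj (normal_vec \<gamma> u t) * ?V u t) = \<sigma>\<^sub>1 * curvature \<gamma> u t + \<sigma>\<^sub>2"
      using flow(3) assms(4) by (intro Re_cnj_normal_vec_mult_flow_velocity) blast
    then show "curvature \<gamma> u t * cmod (tangent_vec \<gamma> u t) * Re (cnj (normal_vec \<gamma> u t) * ?V u t)
      = (\<sigma>\<^sub>1 * curvature \<gamma> u t + \<sigma>\<^sub>2) * curvature \<gamma> u t * cmod (tangent_vec \<gamma> u t)"
      by (simp only: ac_simps)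
  qed
  finally show ?thesis .
qed

lemma winding_le_integral_flow_curvature:
  assumes "smooth_family I \<gamma>" "t \<in> I" "\<And>u. tangent_vec \<gamma> u t \<noteq> 0" "\<sigma>\<^sub>1 \<ge> 0"
  shows "\<sigma>\<^sub>2 * (2*pi * winding \<gamma> t) \<le> integral {0..2*pi}
      (\<lambda>u. (\<sigma>\<^sub>1 * curvature \<gamma> u t + \<sigma>\<^sub>2) * curvature \<gamma> u t * cmod (tangent_vec \<gamma> u t))"
proof -
  define W where "W u = curvature \<gamma> u t * cmod (tangent_vec \<gamma> u t)" for u
  have \<tau>: "smooth_family I (tangent_vec \<gamma>)"
    by (rule smooth_family_tangent_vec[OF assms(1)])
  have cz: "continuous_on {0..2*pi} (\<lambda>u. tangent_vec \<gamma> u t)"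
    and cw: "continuous_on {0..2*pi} (\<lambda>u. tangent_vec (tangent_vec \<gamma>) u t)"
    using smooth_family_continuous_on_fixed_time[OF \<tau> assms(2)]
      smooth_family_continuous_on_fixed_time[OF smooth_family_tangent_vec[OF \<tau>] assms(2)] by blast+
  have "continuous_on {0..2*pi} (\<lambda>u. Im (tangent_vec (tangent_vec \<gamma>) u t / tangent_vec \<gamma> u t))"
    using cz cw assms(3) by (intro continuous_on_Im continuous_on_divide) auto
  then have cW: "continuous_on {0..2*pi} W"
    using curvature_mult_speed[OF assms(3)] by (simp add: W_def)
  have "continuous_on {0..2*pi} (\<lambda>u. W u / cmod (tangent_vec \<gamma> u t))"
    using cW cz assms(3) by (intro continuous_on_divide continuous_on_norm) auto
  then have c\<kappa>: "continuous_on {0..2*pi} (\<lambda>u. curvature \<gamma> u t)"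
    using assms(3) by (simp add: W_def)
  have "\<sigma>\<^sub>2 * (2*pi * winding \<gamma> t) = integral {0..2*pi} (\<lambda>u. \<sigma>\<^sub>2 * W u)"
    by (simp add: winding_def W_def)
  also have "\<dots> \<le> integral {0..2*pi}
      (\<lambda>u. (\<sigma>\<^sub>1 * curvature \<gamma> u t + \<sigma>\<^sub>2) * curvature \<gamma> u t * cmod (tangent_vec \<gamma> u t))"
  proof (rule integral_le)
    show "(\<lambda>u. \<sigma>\<^sub>2 * W u) integrable_on {0..2*pi}"
      using cW by (intro integrable_continuous_interval continuous_intros)
    show "(\<lambda>u. (\<sigma>\<^sub>1 * curvature \<gamma> u t + \<sigma>\<^sub>2) * curvature \<gamma> u t * cmod (tangent_vec \<gamma> u t))
        integrable_on {0..2*pi}"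
      using c\<kappa> cz by (intro integrable_continuous_interval continuous_intros)
    fix u
    have "(\<sigma>\<^sub>1 * curvature \<gamma> u t + \<sigma>\<^sub>2) * curvature \<gamma> u t * cmod (tangent_vec \<gamma> u t)
        = \<sigma>\<^sub>1 * (curvature \<gamma> u t)\<^sup>2 * cmod (tangent_vec \<gamma> u t) + \<sigma>\<^sub>2 * W u"
      by (simp add: W_def power2_eq_square algebra_simps)
    then show "\<sigma>\<^sub>2 * W u \<le> (\<sigma>\<^sub>1 * curvature \<gamma> u t + \<sigma>\<^sub>2) * curvature \<gamma> u t * cmod (tangent_vec \<gamma> u t)"
      using assms(4) by simp
  qed
  finally show ?thesis .
qed

lemma curve_length_le_linear_decay:
  assumes "flow_solution \<sigma>\<^sub>1 \<sigma>\<^sub>2 {0..} \<gamma>" "\<sigma>\<^sub>1 \<ge> 0" "t \<ge> 0"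
  shows "curve_length \<gamma> t \<le> curve_length \<gamma> 0 - 2*pi*\<sigma>\<^sub>2*winding \<gamma> 0 * t"
proof -
  note flow = flow_solutionD[OF assms(1)]
  have "winding \<gamma> constant_on {0..}"
    by (rule winding_constant_on[OF flow(1) connected_Ici flow(2,3)])
  then have winding: "winding \<gamma> s = winding \<gamma> 0" if "s \<ge> 0" for s
    using that by (auto simp: constant_on_def)
  define L' where "L' s = - integral {0..2*pi}
    (\<lambda>u. (\<sigma>\<^sub>1 * curvature \<gamma> u s + \<sigma>\<^sub>2) * curvature \<gamma> u s * cmod (tangent_vec \<gamma> u s))" for s
  have "curve_length \<gamma> t \<le> curve_length \<gamma> 0 + (- (2*pi*\<sigma>\<^sub>2*winding \<gamma> 0)) * t"
  proof (rule has_real_derivative_le_imp_le_linear[OF _ _ assms(3)])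
    show "(curve_length \<gamma> has_real_derivative L' s) (at s within {0..})" if "s \<ge> 0" for s
      unfolding L'_def
      by (rule has_real_derivative_curve_length_flow[OF assms(1) convex_real_interval(1)])
         (use that at_within_atLeast_neq_bot in auto)
    show "L' s \<le> - (2*pi*\<sigma>\<^sub>2*winding \<gamma> 0)" if "s \<ge> 0" for s
    proof -
      have "\<sigma>\<^sub>2 * (2*pi * winding \<gamma> s) \<le> - L' s"
        unfolding L'_def minus_minus
        by (rule winding_le_integral_flow_curvature[OF flow(1)]) (use that flow(3) assms(2) in auto)
      then show ?thesis
        using winding[OF that] by (simp add: algebra_simps)
    qed
  qed
  then show ?thesis
    by simp
qed

theorem lemma2p6:
  fixes \<sigma>\<^sub>1 \<sigma>\<^sub>2 :: real and T :: ereal and \<gamma> :: "real \<Rightarrow> real \<Rightarrow> complex"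
  assumes "\<sigma>\<^sub>1 > 0" and "\<sigma>\<^sub>2 > 0" and "T > 0"
    and "flow_solution \<sigma>\<^sub>1 \<sigma>\<^sub>2 {t. 0 \<le> t \<and> ereal t < T} \<gamma>"
    and "winding \<gamma> 0 > 0"
  shows "T < \<infinity>"
proof (rule ccontr)
  assume "\<not> T < \<infinity>"
  then have "{t. 0 \<le> t \<and> ereal t < T} = {0..}"
    by (cases T) auto
  with assms(4) have flow: "flow_solution \<sigma>\<^sub>1 \<sigma>\<^sub>2 {0..} \<gamma>"
    by simp
  define c where "c = 2*pi*\<sigma>\<^sub>2*winding \<gamma> 0"
  have "c > 0"
    using assms(2,5) by (simp add: c_def)
  define t where "t = curve_length \<gamma> 0 / c + 1"
  have "t \<ge> 0"
    using curve_length_nonneg[of \<gamma> 0] \<open>c > 0\<close> by (simp add: t_def)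
  have "curve_length \<gamma> 0 - c * t = - c"
    using \<open>c > 0\<close> by (simp add: t_def field_simps)
  then show False
    using curve_length_le_linear_decay[OF flow _ \<open>t \<ge> 0\<close>] assms(1) curve_length_nonneg[of \<gamma> t]
      \<open>c > 0\<close> unfolding c_def by linarith
qed

end
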